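(* Let $k$ be a positive integer, $\hat s_k$ an integer, $m_{k-1}\in(0,1)$, and $\hat B_{k,\hat s_k}\in[0,2]$. For integers $\ell\ge\hat s_k$ define $$\hat B_{k,\ell}=\min\big\{2,\ m_{k-1}^{\ell-\hat s_k}(\ell-\hat s_k+1)\hat B_{k,\hat s_k}\big\}.$$ Then for every integer $s$ satisfying $m_{k-1}^{s-\hat s_k}\le\frac{1}{s-\hat s_k+1}$ and $s\ge\frac{km_{k-1}}{1-m_{k-1}}+\hat s_k$, and every integer $\ell\ge s$, $$\hat B_{k,\ell}\le\Big(\frac1k+\frac{k-1}{k}m_{k-1}\Big)^{\ell-s}\hat B_{k,s}.$$ *)

theory Defs
  imports Complex_Main
begin

definition Bhat :: "real \<Rightarrow> int \<Rightarrow> real \<Rightarrow> int \<Rightarrow> real" where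
  "Bhat m shat B0 l = min 2 (m ^ nat (l - shat) * real_of_int (l - shat + 1) * B0)"

end

theory Submission
  imports Defs
begin

text \<open>With \<open>c = 1/k + (k-1)/k m\<close> and \<open>f t = m^t (t+1)\<close>, the ratio \<open>f (t+1) / f t = m (t+2)/(t+1)\<close>
  is at most \<open>c\<close> once \<open>t \<ge> k m/(1-m)\<close>, so \<open>f\<close> decays geometrically with rate \<open>c\<close> from
  \<open>s - shat\<close> on. The hypothesis \<open>f (s - shat) \<le> 1\<close> means that the truncation at 2 is inactive
  at \<open>s\<close>, whence \<open>Bhat l \<le> f (l - shat) B0 \<le> c^(l-s) f (s - shat) B0 = c^(l-s) Bhat s\<close>.\<close>

lemma succ_ratio_le_convex_comb:
  fixes k m t :: real
  assumes "k > 0" "m < 1" "t \<ge> k * m / (1 - m)"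
  shows "m * (t + 2) \<le> (1 / k + (k - 1) / k * m) * (t + 1)"
proof -
  have "k * m \<le> t * (1 - m)"
    using assms(2,3) by (simp add: field_simps)
  then have "0 \<le> (t * (1 - m) + 1 - (k + 1) * m) / k"
    using assms(1,2) by (simp add: algebra_simps)
  also have "\<dots> = (1 / k + (k - 1) / k * m) * (t + 1) - m * (t + 2)"
    using assms(1) by (simp add: field_simps)
  finally show ?thesis by simp
qed

lemma ratio_bound_imp_geometric_bound:
  fixes a :: "nat \<Rightarrow> 'a::linordered_semiring_1"
  assumes "0 \<le> c" and "\<And>i. n \<le> i \<Longrightarrow> a (Suc i) \<le> c * a i"
  shows "a (n + j) \<le> c ^ j * a n"
proof (induction j)
  case 0
  show ?case by simp
next
  case (Suc j)
  have "a (n + Suc j) \<le> c * a (n + j)"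
    using assms(2)[of "n + j"] by simp
  also have "\<dots> \<le> c * (c ^ j * a n)"
    using Suc.IH assms(1) by (rule mult_left_mono)
  finally show ?case by (simp add: mult.assoc)
qed

lemma power_mult_succ_geometric_decay:
  fixes k m :: real and n j :: nat
  assumes "k \<ge> 1" "0 \<le> m" "m < 1" "real n \<ge> k * m / (1 - m)"
  shows "m ^ (n + j) * (real (n + j) + 1)
    \<le> (1 / k + (k - 1) / k * m) ^ j * (m ^ n * (real n + 1))"
proof (rule ratio_bound_imp_geometric_bound[where a = "\<lambda>i. m ^ i * (real i + 1)"])
  show "0 \<le> 1 / k + (k - 1) / k * m"
    using assms(1,2) by (intro add_nonneg_nonneg mult_nonneg_nonneg divide_nonneg_nonneg) auto
next
  fix i
  assume "n \<le> i"
  then have "real i \<ge> k * m / (1 - m)"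
    using assms(4) by linarith
  then have ratio: "m * (real i + 2) \<le> (1 / k + (k - 1) / k * m) * (real i + 1)"
    using succ_ratio_le_convex_comb assms(1,3) by simp
  have "m ^ Suc i * (real (Suc i) + 1) = m ^ i * (m * (real i + 2))"
    by (simp add: ac_simps)
  also have "\<dots> \<le> m ^ i * ((1 / k + (k - 1) / k * m) * (real i + 1))"
    using ratio assms(2) by (simp add: mult_left_mono)
  also have "\<dots> = (1 / k + (k - 1) / k * m) * (m ^ i * (real i + 1))"
    by (simp add: ac_simps)
  finally show "m ^ Suc i * (real (Suc i) + 1) \<le> (1 / k + (k - 1) / k * m) * (m ^ i * (real i + 1))" .
qed

lemma Bhat_le_unclipped: "Bhat m shat B0 l \<le> m ^ nat (l - shat) * real_of_int (l - shat + 1) * B0"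
  unfolding Bhat_def by simp

lemma Bhat_eq_unclipped:
  assumes "0 \<le> B0" "B0 \<le> 2" "m ^ nat (l - shat) * real_of_int (l - shat + 1) \<le> 1"
  shows "Bhat m shat B0 l = m ^ nat (l - shat) * real_of_int (l - shat + 1) * B0"
proof -
  have "m ^ nat (l - shat) * real_of_int (l - shat + 1) * B0 \<le> 1 * B0"
    using assms(3,1) by (rule mult_right_mono)
  then show ?thesis
    unfolding Bhat_def using assms(2) by simp
qed

theorem lemma5:
  fixes k :: nat and shat s l :: int and m B0 :: real
  assumes "k \<ge> 1"
    and "0 < m" and "m < 1"
    and "0 \<le> B0" and "B0 \<le> 2"
    and "m ^ nat (s - shat) \<le> 1 / real_of_int (s - shat + 1)"
    and "real_of_int s \<ge> real k * m / (1 - m) + real_of_int shat"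
    and "l \<ge> s"
  shows "Bhat m shat B0 l \<le> (1 / real k + (real k - 1) / real k * m) ^ nat (l - s) * Bhat m shat B0 s"
proof -
  define n where "n = nat (s - shat)"
  define j where "j = nat (l - s)"
  have "0 \<le> real k * m / (1 - m)"
    using assms(2,3) by simp
  then have n_real: "real_of_int (s - shat) = real n"
    using assms(7) unfolding n_def by simp
  then have s_real: "real_of_int (s - shat + 1) = real n + 1"
    by simp
  have l_shat: "nat (l - shat) = n + j" "real_of_int (l - shat + 1) = real (n + j) + 1"
    using n_real assms(8) unfolding n_def j_def by linarith+
  have "m ^ n * (real n + 1) \<le> 1"
    using assms(6) unfolding n_def[symmetric] s_real by (simp add: field_simps)
  then have B_s: "Bhat m shat B0 s = m ^ n * (real n + 1) * B0"
    using Bhat_eq_unclipped[OF assms(4,5), of m s shat] unfolding n_def[symmetric] s_real by simp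
  have "Bhat m shat B0 l \<le> m ^ (n + j) * (real (n + j) + 1) * B0"
    using Bhat_le_unclipped[of m shat B0 l] unfolding l_shat .
  also have "\<dots> \<le> (1 / real k + (real k - 1) / real k * m) ^ j * (m ^ n * (real n + 1)) * B0"
    using power_mult_succ_geometric_decay[of "real k" m n j] assms(1-4,7) n_real
    by (intro mult_right_mono) auto
  finally show ?thesis
    unfolding B_s j_def by (simp add: mult.assoc)
qed

end
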